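(* Let $n,k,d$ be integers with $1\le k\le d<n$, let $\alpha,\gamma>0$, and let $j$ be an integer with $0\le j\le k-1$. Then $$C^{\mathrm{exact}}_{n,k,d}(\alpha,\gamma)\ \ge\ \frac{n}{n-j}\, C^{\mathrm{exact}}_{n-j,k-j,d-j}(\alpha,\gamma).$$
   Context: A distributed storage system (DSS) with parameters $(n,k,d)$ stores a file across $n$ nodes, each storing an amount $\alpha$ of information (e.g. $\alpha$ symbols over a finite field, where symbols may be split into arbitrarily many sub-symbols), such that the file can be reconstructed from the contents of any $k$ nodes, and any lost node can be repaired by contacting any $d$ of the remaining nodes, each of which transmits an amount $\beta$ to the replacement node, for a total repair bandwidth $\gamma=d\beta$. Repair is exact: the replacement node stores exactly the same content as the lost node. $C^{\mathrm{exact}}_{n,k,d}(\alpha,\gamma)$ denotes the maximum size of a file that can be stored by such an exact-repair DSS with $n$ nodes, node size $\alpha$ and total repair bandwidth $\gamma$. *)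

theory Defs
  imports Complex_Main "HOL-Library.FuncSet"
begin

text \<open>Node i stores at most alpha q-ary symbols: it takes at most q powr alpha values.  Sub-symbol splitting is covered by allowing arbitrary q
  (e.g. q^L).\<close>

definition exact_repair_code ::
  "nat \<Rightarrow> nat \<Rightarrow> nat \<Rightarrow> real \<Rightarrow> real \<Rightarrow> nat \<Rightarrow> nat set \<Rightarrow> (nat \<Rightarrow> nat \<Rightarrow> nat) \<Rightarrow> bool"
where
  "exact_repair_code n k d \<alpha> \<gamma> q M c \<longleftrightarrow>
     finite M \<and> M \<noteq> {} \<and>
     (\<forall>i<n. real (card (c i ` M)) \<le> real q powr \<alpha>) \<and>
     (\<forall>K. K \<subseteq> {..<n} \<and> card K = k \<longrightarrow>
        (\<exists>dec :: (nat \<Rightarrow> nat) \<Rightarrow> nat. \<forall>m\<in>M. dec (restrict (\<lambda>i. c i m) K) = m)) \<and>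
     (\<forall>i<n. \<forall>D. D \<subseteq> {..<n} - {i} \<and> card D = d \<longrightarrow>
        (\<exists>(\<phi> :: nat \<Rightarrow> nat \<Rightarrow> nat) (\<psi> :: (nat \<Rightarrow> nat) \<Rightarrow> nat).
           (\<forall>h\<in>D. real (card ((\<lambda>m. \<phi> h (c h m)) ` M)) \<le> real q powr (\<gamma> / real d)) \<and>
           (\<forall>m\<in>M. \<psi> (restrict (\<lambda>h. \<phi> h (c h m)) D) = c i m)))"

definition C_exact :: "nat \<Rightarrow> nat \<Rightarrow> nat \<Rightarrow> real \<Rightarrow> real \<Rightarrow> real" where
  "C_exact n k d \<alpha> \<gamma> =
     Sup {log (real q) (real (card M)) | q M c. 2 \<le> q \<and> exact_repair_code n k d \<alpha> \<gamma> q M c}"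

end

theory Submission
  imports Defs
begin

text \<open>Iterating, it suffices to treat j = 1. From an (n-1, k-1, d-1) code over an alphabet of
  size q one builds an (n, k, d) code out of n d independent copies of it, indexed by
  (x, r) \<in> [n] \<times> [d]: in copy (x, r) node x is absent and the other n - 1 nodes play the nodes
  of the small code. A node then stores (n-1) d small nodes, so the alphabet becomes
  Q = q^((n-1) d) while the file grows by a factor n d, which gives the ratio n/(n-1).
  Any k nodes contain k - 1 nodes of every copy. A lost node is repaired copy by copy from d - 1
  of its d helpers; letting the helper that sits out rotate with r makes every helper serve in at
  most (n-1)(d-1) copies, so its message takes at most q^((n-1) \<gamma>) = Q^(\<gamma>/d) values.\<close>

lemma restrict_eq_restrict_iff: "restrict f A = restrict g A \<longleftrightarrow> (\<forall>x\<in>A. f x = g x)"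
  by (auto simp: fun_eq_iff)

lemma ex_left_inverse_on_iff_inj_on: "(\<exists>g. \<forall>x\<in>A. g (f x) = x) \<longleftrightarrow> inj_on f A"
  by (metis inj_on_def inv_into_f_f)

lemma ex_factorization_iff:
  "(\<exists>\<psi>. \<forall>x\<in>A. \<psi> (f x) = g x) \<longleftrightarrow> (\<forall>x\<in>A. \<forall>y\<in>A. f x = f y \<longrightarrow> g x = g y)"
proof
  assume "\<forall>x\<in>A. \<forall>y\<in>A. f x = f y \<longrightarrow> g x = g y"
  then have "\<forall>x\<in>A. g (inv_into A f (f x)) = g x"
    by (metis f_inv_into_f image_eqI inv_into_into)
  then show "\<exists>\<psi>. \<forall>x\<in>A. \<psi> (f x) = g x"
    by (intro exI[of _ "\<lambda>v. g (inv_into A f v)"])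
qed metis

text \<open>The notion of exact_repair_code for arbitrary types of files and node contents, with
  decoders and repair maps replaced by injectivity and functional dependence; repair messages
  take values in the content type.\<close>

definition repair_code ::
  "nat \<Rightarrow> nat \<Rightarrow> nat \<Rightarrow> real \<Rightarrow> real \<Rightarrow> nat \<Rightarrow> 'f set \<Rightarrow> (nat \<Rightarrow> 'f \<Rightarrow> 'c) \<Rightarrow> bool"
where
  "repair_code n k d \<alpha> \<gamma> q M c \<longleftrightarrow>
     finite M \<and> M \<noteq> {} \<and>
     (\<forall>i<n. real (card (c i ` M)) \<le> real q powr \<alpha>) \<and>
     (\<forall>K. K \<subseteq> {..<n} \<and> card K = k \<longrightarrow> inj_on (\<lambda>m. restrict (\<lambda>i. c i m) K) M) \<and>
     (\<forall>i<n. \<forall>D. D \<subseteq> {..<n} - {i} \<and> card D = d \<longrightarrow>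
        (\<exists>\<phi> :: nat \<Rightarrow> 'c \<Rightarrow> 'c.
           (\<forall>h\<in>D. real (card ((\<lambda>m. \<phi> h (c h m)) ` M)) \<le> real q powr (\<gamma> / real d)) \<and>
           (\<forall>m1\<in>M. \<forall>m2\<in>M. (\<forall>h\<in>D. \<phi> h (c h m1) = \<phi> h (c h m2)) \<longrightarrow> c i m1 = c i m2)))"

lemma repair_codeI:
  assumes "finite M" and "M \<noteq> {}"
    and "\<And>i. i < n \<Longrightarrow> real (card (c i ` M)) \<le> real q powr \<alpha>"
    and "\<And>K. K \<subseteq> {..<n} \<Longrightarrow> card K = k \<Longrightarrow> inj_on (\<lambda>m. restrict (\<lambda>i. c i m) K) M"
    and "\<And>i D. i < n \<Longrightarrow> D \<subseteq> {..<n} - {i} \<Longrightarrow> card D = d \<Longrightarrow>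
      \<exists>\<phi> :: nat \<Rightarrow> 'c \<Rightarrow> 'c.
        (\<forall>h\<in>D. real (card ((\<lambda>m. \<phi> h (c h m)) ` M)) \<le> real q powr (\<gamma> / real d)) \<and>
        (\<forall>m1\<in>M. \<forall>m2\<in>M. (\<forall>h\<in>D. \<phi> h (c h m1) = \<phi> h (c h m2)) \<longrightarrow> c i m1 = c i m2)"
  shows "repair_code n k d \<alpha> \<gamma> q M c"
  using assms unfolding repair_code_def by blast

context
  fixes n k d :: nat and \<alpha> \<gamma> :: real and q :: nat and M :: "'f set" and c :: "nat \<Rightarrow> 'f \<Rightarrow> 'c"
  assumes code: "repair_code n k d \<alpha> \<gamma> q M c"
begin

lemma repair_code_finite: "finite M"
  using code by (simp add: repair_code_def)

lemma repair_code_nonempty: "M \<noteq> {}"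
  using code by (simp add: repair_code_def)

lemma repair_code_node_card: "i < n \<Longrightarrow> real (card (c i ` M)) \<le> real q powr \<alpha>"
  using code by (simp add: repair_code_def)

lemma repair_code_decodable:
  "K \<subseteq> {..<n} \<Longrightarrow> card K = k \<Longrightarrow> inj_on (\<lambda>m. restrict (\<lambda>i. c i m) K) M"
  using code by (simp add: repair_code_def)

lemma repair_code_repairable:
  assumes "i < n" and "D \<subseteq> {..<n} - {i}" and "card D = d"
  obtains \<phi> :: "nat \<Rightarrow> 'c \<Rightarrow> 'c" where
    "\<And>h. h \<in> D \<Longrightarrow> real (card ((\<lambda>m. \<phi> h (c h m)) ` M)) \<le> real q powr (\<gamma> / real d)"
    and "\<And>m1 m2. m1 \<in> M \<Longrightarrow> m2 \<in> M \<Longrightarrow> (\<And>h. h \<in> D \<Longrightarrow> \<phi> h (c h m1) = \<phi> h (c h m2)) \<Longrightarrow>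
      c i m1 = c i m2"
proof -
  have "\<exists>\<phi> :: nat \<Rightarrow> 'c \<Rightarrow> 'c.
        (\<forall>h\<in>D. real (card ((\<lambda>m. \<phi> h (c h m)) ` M)) \<le> real q powr (\<gamma> / real d)) \<and>
        (\<forall>m1\<in>M. \<forall>m2\<in>M. (\<forall>h\<in>D. \<phi> h (c h m1) = \<phi> h (c h m2)) \<longrightarrow> c i m1 = c i m2)"
    using code assms unfolding repair_code_def by simp
  then show ?thesis using that by blast
qed

end

lemma exact_repair_code_iff_repair_code:
  "exact_repair_code n k d \<alpha> \<gamma> q M c \<longleftrightarrow> repair_code n k d \<alpha> \<gamma> q M c"
  unfolding exact_repair_code_def repair_code_def
  by (simp only: ex_left_inverse_on_iff_inj_on ex_simps ex_factorization_iff
      restrict_eq_restrict_iff)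

lemma repair_code_relabel_files:
  assumes "repair_code n k d \<alpha> \<gamma> q M c" and e: "inj_on e M"
  shows "repair_code n k d \<alpha> \<gamma> q (e ` M) (\<lambda>i m. c i (inv_into M e m))"
  using assms unfolding repair_code_def
  by (simp add: comp_inj_on_iff[OF e] o_def image_image cong: inj_on_cong image_cong)

lemma relabel_repair_map:
  fixes g :: "'c \<Rightarrow> nat" and \<phi> :: "nat \<Rightarrow> 'c \<Rightarrow> 'c"
  assumes finM: "finite M" and finD: "finite D" and g: "inj_on g U"
    and U: "\<And>h m. h \<in> D \<Longrightarrow> m \<in> M \<Longrightarrow> c h m \<in> U"
  obtains \<phi>' :: "nat \<Rightarrow> nat \<Rightarrow> nat" where
    "\<And>h. h \<in> D \<Longrightarrow> card ((\<lambda>m. \<phi>' h (g (c h m))) ` M) = card ((\<lambda>m. \<phi> h (c h m)) ` M)"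
    and "\<And>h m1 m2. h \<in> D \<Longrightarrow> m1 \<in> M \<Longrightarrow> m2 \<in> M \<Longrightarrow>
      \<phi>' h (g (c h m1)) = \<phi>' h (g (c h m2)) \<longleftrightarrow> \<phi> h (c h m1) = \<phi> h (c h m2)"
proof -
  have finW: "finite (\<Union>h\<in>D. (\<lambda>m. \<phi> h (c h m)) ` M)" using finD finM by simp
  obtain G :: "'c \<Rightarrow> nat" where G: "inj_on G (\<Union>h\<in>D. (\<lambda>m. \<phi> h (c h m)) ` M)"
    using finite_imp_inj_to_nat_seg[OF finW] by blast
  define \<phi>' where "\<phi>' h v = G (\<phi> h (inv_into U g v))" for h v
  have \<phi>'_eq: "\<phi>' h (g (c h m)) = G (\<phi> h (c h m))" if "h \<in> D" "m \<in> M" for h m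
    using U[OF that] by (simp add: \<phi>'_def inv_into_f_f[OF g])
  show ?thesis
  proof (rule that)
    fix h assume h: "h \<in> D"
    have "(\<lambda>m. \<phi>' h (g (c h m))) ` M = G ` (\<lambda>m. \<phi> h (c h m)) ` M"
      using h by (simp add: \<phi>'_eq image_image cong: image_cong)
    moreover have "inj_on G ((\<lambda>m. \<phi> h (c h m)) ` M)" by (rule inj_on_subset[OF G]) (use h in blast)
    ultimately show "card ((\<lambda>m. \<phi>' h (g (c h m))) ` M) = card ((\<lambda>m. \<phi> h (c h m)) ` M)"
      by (simp add: card_image)
  next
    fix h m1 m2 assume h: "h \<in> D" and m: "m1 \<in> M" "m2 \<in> M"
    have "G (\<phi> h (c h m1)) = G (\<phi> h (c h m2)) \<longleftrightarrow> \<phi> h (c h m1) = \<phi> h (c h m2)"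
      by (rule inj_on_eq_iff[OF G]) (use h m in blast)+
    then show "\<phi>' h (g (c h m1)) = \<phi>' h (g (c h m2)) \<longleftrightarrow> \<phi> h (c h m1) = \<phi> h (c h m2)"
      using h m by (simp add: \<phi>'_eq)
  qed
qed

lemma repair_code_relabel_contents:
  fixes g :: "'c \<Rightarrow> nat"
  assumes code: "repair_code n k d \<alpha> \<gamma> q M c" and g: "inj_on g (\<Union>i<n. c i ` M)"
  shows "repair_code n k d \<alpha> \<gamma> q M (\<lambda>i m. g (c i m))"
proof (rule repair_codeI)
  show "finite M" "M \<noteq> {}" using code by (simp_all add: repair_code_finite repair_code_nonempty)
next
  fix i assume i: "i < n"
  have "card ((\<lambda>m. g (c i m)) ` M) \<le> card (c i ` M)"
    using repair_code_finite[OF code] card_image_le[of "c i ` M" g] by (simp add: image_image)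
  then show "real (card ((\<lambda>m. g (c i m)) ` M)) \<le> real q powr \<alpha>"
    using repair_code_node_card[OF code i] by linarith
next
  fix K assume K: "K \<subseteq> {..<n}" "card K = k"
  show "inj_on (\<lambda>m. restrict (\<lambda>i. g (c i m)) K) M"
  proof (rule inj_onI)
    fix m1 m2 assume m: "m1 \<in> M" "m2 \<in> M"
      and eq: "restrict (\<lambda>i. g (c i m1)) K = restrict (\<lambda>i. g (c i m2)) K"
    have "c i m1 = c i m2" if "i \<in> K" for i
    proof -
      have "g (c i m1) = g (c i m2)" using eq that by (simp add: restrict_eq_restrict_iff)
      moreover have "c i m1 \<in> (\<Union>i<n. c i ` M)" "c i m2 \<in> (\<Union>i<n. c i ` M)" using that K m by auto
      ultimately show ?thesis using g by (simp add: inj_on_eq_iff)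
    qed
    then have "restrict (\<lambda>i. c i m1) K = restrict (\<lambda>i. c i m2) K" by (rule restrict_ext)
    then show "m1 = m2" by (rule inj_onD[OF repair_code_decodable[OF code K] _ m])
  qed
next
  fix i D assume i: "i < n" and D: "D \<subseteq> {..<n} - {i}" "card D = d"
  obtain \<phi> :: "nat \<Rightarrow> 'c \<Rightarrow> 'c" where
    bound: "\<And>h. h \<in> D \<Longrightarrow> real (card ((\<lambda>m. \<phi> h (c h m)) ` M)) \<le> real q powr (\<gamma> / real d)" and
    determ: "\<And>m1 m2. m1 \<in> M \<Longrightarrow> m2 \<in> M \<Longrightarrow> (\<And>h. h \<in> D \<Longrightarrow> \<phi> h (c h m1) = \<phi> h (c h m2)) \<Longrightarrow>
      c i m1 = c i m2"
    using repair_code_repairable[OF code i D] by blast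
  have "finite D" using D(1) by (rule finite_subset) simp
  then obtain \<phi>' :: "nat \<Rightarrow> nat \<Rightarrow> nat" where
    card_eq: "\<And>h. h \<in> D \<Longrightarrow> card ((\<lambda>m. \<phi>' h (g (c h m))) ` M) = card ((\<lambda>m. \<phi> h (c h m)) ` M)"
    and msg_eq: "\<And>h m1 m2. h \<in> D \<Longrightarrow> m1 \<in> M \<Longrightarrow> m2 \<in> M \<Longrightarrow>
      \<phi>' h (g (c h m1)) = \<phi>' h (g (c h m2)) \<longleftrightarrow> \<phi> h (c h m1) = \<phi> h (c h m2)"
    using relabel_repair_map[OF repair_code_finite[OF code] _ g, of D c \<phi>] D(1) by blast
  show "\<exists>\<phi> :: nat \<Rightarrow> nat \<Rightarrow> nat.
      (\<forall>h\<in>D. real (card ((\<lambda>m. \<phi> h (g (c h m))) ` M)) \<le> real q powr (\<gamma> / real d)) \<and>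
      (\<forall>m1\<in>M. \<forall>m2\<in>M. (\<forall>h\<in>D. \<phi> h (g (c h m1)) = \<phi> h (g (c h m2))) \<longrightarrow> g (c i m1) = g (c i m2))"
  proof (intro exI[of _ \<phi>'] conjI ballI impI)
    show "real (card ((\<lambda>m. \<phi>' h (g (c h m))) ` M)) \<le> real q powr (\<gamma> / real d)" if "h \<in> D" for h
      using card_eq[OF that] bound[OF that] by simp
  next
    fix m1 m2 assume m: "m1 \<in> M" "m2 \<in> M"
      and same: "\<forall>h\<in>D. \<phi>' h (g (c h m1)) = \<phi>' h (g (c h m2))"
    have "\<phi> h (c h m1) = \<phi> h (c h m2)" if "h \<in> D" for h
      using same that msg_eq[OF that m] by blast
    then show "g (c i m1) = g (c i m2)" by (simp add: determ[OF m])
  qed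
qed

lemma repair_code_nat_relabel:
  assumes code: "repair_code n k d \<alpha> \<gamma> q M c"
  obtains M' :: "nat set" and c' :: "nat \<Rightarrow> nat \<Rightarrow> nat"
  where "repair_code n k d \<alpha> \<gamma> q M' c'" and "card M' = card M"
proof -
  have finM: "finite M" by (rule repair_code_finite[OF code])
  obtain e :: "_ \<Rightarrow> nat" where e: "inj_on e M"
    using finite_imp_inj_to_nat_seg[OF finM] by blast
  have finU: "finite (\<Union>i<n. c i ` M)" using finM by simp
  obtain g :: "_ \<Rightarrow> nat" where g: "inj_on g (\<Union>i<n. c i ` M)"
    using finite_imp_inj_to_nat_seg[OF finU] by blast
  have "repair_code n k d \<alpha> \<gamma> q (e ` M) (\<lambda>i m. g (c i (inv_into M e m)))"
    using repair_code_relabel_files[OF repair_code_relabel_contents[OF code g] e] .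
  moreover have "card (e ` M) = card M" using e by (rule card_image)
  ultimately show ?thesis by (rule that)
qed

lemma card_restrict_image_le_prod:
  assumes "finite A" and "finite X"
  shows "card ((\<lambda>x. restrict (\<lambda>a. f a x) A) ` X) \<le> (\<Prod>a\<in>A. card (f a ` X))"
proof -
  have "(\<lambda>x. restrict (\<lambda>a. f a x) A) ` X \<subseteq> PiE A (\<lambda>a. f a ` X)" by auto
  then have "card ((\<lambda>x. restrict (\<lambda>a. f a x) A) ` X) \<le> card (PiE A (\<lambda>a. f a ` X))"
    by (rule card_mono[rotated]) (simp add: assms finite_PiE)
  then show ?thesis by (simp add: card_PiE assms(1))
qed

lemma card_restrict_image_le_power:
  assumes "finite A" and "finite X" and "\<And>a. a \<in> A \<Longrightarrow> real (card (f a ` X)) \<le> b"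
  shows "real (card ((\<lambda>x. restrict (\<lambda>a. f a x) A) ` X)) \<le> b ^ card A"
proof -
  have "real (card ((\<lambda>x. restrict (\<lambda>a. f a x) A) ` X)) \<le> real (\<Prod>a\<in>A. card (f a ` X))"
    using card_restrict_image_le_prod[OF assms(1,2)] by (rule of_nat_mono)
  also have "\<dots> = (\<Prod>a\<in>A. real (card (f a ` X)))" by (rule of_nat_prod)
  also have "\<dots> \<le> (\<Prod>a\<in>A. b)" by (rule prod_mono) (simp add: assms(3))
  finally show ?thesis by simp
qed

lemma repair_code_file_size_le:
  assumes code: "repair_code n k d \<alpha> \<gamma> q M c" and "k \<le> n" and "2 \<le> q"
  shows "log (real q) (real (card M)) \<le> real k * \<alpha>"
proof -
  have finM: "finite M" by (rule repair_code_finite[OF code])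
  have "card M = card ((\<lambda>m. restrict (\<lambda>i. c i m) {..<k}) ` M)"
    using repair_code_decodable[OF code] assms(2) by (simp add: card_image)
  also have "real \<dots> \<le> (real q powr \<alpha>) ^ card {..<k}"
    using repair_code_node_card[OF code] assms(2)
    by (intro card_restrict_image_le_power finM) auto
  also have "\<dots> = real q powr (real k * \<alpha>)" using assms(3) by (simp add: powr_power)
  finally have "real (card M) \<le> real q powr (real k * \<alpha>)" .
  moreover have "0 < card M" using finM repair_code_nonempty[OF code] by (simp add: card_gt_0_iff)
  ultimately show ?thesis using assms(3) by (simp add: log_le_iff)
qed

lemma repair_code_single_file:
  assumes "0 \<le> \<alpha>" and "0 \<le> \<gamma>"
  shows "repair_code n k d \<alpha> \<gamma> 2 {0::nat} (\<lambda>i m. 0::nat)"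
proof (rule repair_codeI)
  show "real (card ((\<lambda>m. 0::nat) ` {0::nat})) \<le> real 2 powr \<alpha>"
    using ge_one_powr_ge_zero[of 2 \<alpha>] assms by simp
  show "\<exists>\<phi> :: nat \<Rightarrow> nat \<Rightarrow> nat.
      (\<forall>h\<in>D. real (card ((\<lambda>m. \<phi> h 0) ` {0::nat})) \<le> real 2 powr (\<gamma> / real d)) \<and>
      (\<forall>m1\<in>{0::nat}. \<forall>m2\<in>{0}. (\<forall>h\<in>D. \<phi> h 0 = \<phi> h 0) \<longrightarrow> (0::nat) = 0)" for D
    using ge_one_powr_ge_zero[of 2 "\<gamma> / real d"] assms by (intro exI[of _ "\<lambda>_ _. 0"]) simp
qed simp_all

definition squeeze :: "nat \<Rightarrow> nat \<Rightarrow> nat" where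
  "squeeze x i = (if i < x then i else i - 1)"

lemma squeeze_less: "x < n \<Longrightarrow> i < n \<Longrightarrow> i \<noteq> x \<Longrightarrow> squeeze x i < n - 1"
  by (auto simp: squeeze_def)

lemma inj_on_squeeze: "inj_on (squeeze x) (- {x})"
  by (auto simp: squeeze_def inj_on_def split: if_splits)

text \<open>Helpers used in copy p = (x, r) when node i is repaired from D: the helpers other than the
  absent node x, and if x is not a helper, the r-th helper e r sits out instead.\<close>

definition helpers :: "nat set \<Rightarrow> (nat \<Rightarrow> nat) \<Rightarrow> nat \<times> nat \<Rightarrow> nat set" where
  "helpers D e p = (if fst p \<in> D then D - {fst p} else D - {e (snd p)})"

lemma helpers_subset: "helpers D e p \<subseteq> D - {fst p}"
  by (auto simp: helpers_def)

lemma card_helpers: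
  assumes "finite D" and "e (snd p) \<in> D"
  shows "card (helpers D e p) = card D - 1"
  using assms by (simp add: helpers_def)

lemma card_helper_load:
  assumes e: "bij_betw e {..<d} D" and D: "D \<subseteq> {..<n} - {i}" "card D = d"
    and i: "i < n" and h: "h \<in> D"
  shows "card {p \<in> ({..<n} - {i}) \<times> {..<d}. h \<in> helpers D e p} \<le> (n - 1) * (d - 1)"
proof -
  have finD: "finite D" using D(1) by (rule finite_subset) simp
  obtain r0 where r0: "r0 < d" "e r0 = h"
    using e h by (metis bij_betw_def imageE lessThan_iff)
  have "{p \<in> ({..<n} - {i}) \<times> {..<d}. h \<in> helpers D e p}
      \<subseteq> (D - {h}) \<times> {..<d} \<union> ({..<n} - insert i D) \<times> ({..<d} - {r0})"
    using h r0 by (auto simp: helpers_def)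
  then have "card {p \<in> ({..<n} - {i}) \<times> {..<d}. h \<in> helpers D e p}
      \<le> card ((D - {h}) \<times> {..<d} \<union> ({..<n} - insert i D) \<times> ({..<d} - {r0}))"
    by (rule card_mono[rotated]) (use finD in auto)
  also have "\<dots> \<le> card ((D - {h}) \<times> {..<d}) + card (({..<n} - insert i D) \<times> ({..<d} - {r0}))"
    by (rule card_Un_le)
  also have "\<dots> = (d - 1) * d + (n - (d + 1)) * (d - 1)"
  proof -
    have "i \<notin> D" "insert i D \<subseteq> {..<n}" using D(1) i by auto
    then have "card ({..<n} - insert i D) = n - (d + 1)"
      using finD D(2) by (simp add: card_Diff_subset)
    then show ?thesis using finD D(2) h r0 by (simp add: card_cartesian_product)
  qed
  also have "\<dots> = (n - 1) * (d - 1)"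
  proof -
    have "d < n" using D card_mono[of "{..<n} - {i}" D] i by auto
    then have "n - 1 = d + (n - (d + 1))" by simp
    then show ?thesis by (metis add_mult_distrib2 mult.commute)
  qed
  finally show ?thesis .
qed

lemma card_image_eval_PiE_le:
  assumes "finite M" and "p \<in> I"
  shows "card ((\<lambda>F. g (F p)) ` PiE I (\<lambda>_. M)) \<le> card (g ` M)"
proof -
  have "(\<lambda>F. g (F p)) ` PiE I (\<lambda>_. M) \<subseteq> g ` M"
    using assms(2) by (auto intro: PiE_mem)
  then show ?thesis by (rule card_mono[rotated]) (simp add: assms(1))
qed

definition lifted_code ::
  "nat \<Rightarrow> nat \<Rightarrow> (nat \<Rightarrow> 'f \<Rightarrow> 'c) \<Rightarrow> nat \<Rightarrow> (nat \<times> nat \<Rightarrow> 'f) \<Rightarrow> nat \<times> nat \<Rightarrow> 'c" where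
  "lifted_code n d c i F = restrict (\<lambda>p. c (squeeze (fst p) i) (F p)) (({..<n} - {i}) \<times> {..<d})"

lemma lifted_code_node_card:
  assumes small: "repair_code (n - 1) k' d' \<alpha> \<gamma>' q M c" and i: "i < n" and q: "0 < q"
  shows "real (card (lifted_code n d c i ` PiE ({..<n} \<times> {..<d}) (\<lambda>_. M)))
    \<le> real (q ^ ((n - 1) * d)) powr \<alpha>"
proof -
  have finM: "finite M" by (rule repair_code_finite[OF small])
  have "real (card (lifted_code n d c i ` PiE ({..<n} \<times> {..<d}) (\<lambda>_. M)))
      \<le> (real q powr \<alpha>) ^ card (({..<n} - {i}) \<times> {..<d})"
    unfolding lifted_code_def
  proof (rule card_restrict_image_le_power)
    fix p assume p: "p \<in> ({..<n} - {i}) \<times> {..<d}"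
    then have "card ((\<lambda>F. c (squeeze (fst p) i) (F p)) ` PiE ({..<n} \<times> {..<d}) (\<lambda>_. M))
        \<le> card (c (squeeze (fst p) i) ` M)"
      by (intro card_image_eval_PiE_le finM) auto
    also have "real \<dots> \<le> real q powr \<alpha>"
      using p i by (intro repair_code_node_card[OF small] squeeze_less) auto
    finally show "real (card ((\<lambda>F. c (squeeze (fst p) i) (F p)) ` PiE ({..<n} \<times> {..<d}) (\<lambda>_. M)))
        \<le> real q powr \<alpha>" by simp
  qed (simp_all add: finM finite_PiE)
  also have "\<dots> = real (q ^ ((n - 1) * d)) powr \<alpha>"
    using i q by (simp add: card_cartesian_product powr_power powr_realpow[symmetric] powr_powr
        mult.commute)
  finally show ?thesis .
qed

lemma lifted_code_decodable:
  assumes small: "repair_code (n - 1) (k - 1) d' \<alpha> \<gamma>' q M c"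
    and K: "K \<subseteq> {..<n}" "card K = k"
  shows "inj_on (\<lambda>F. restrict (\<lambda>i. lifted_code n d c i F) K) (PiE ({..<n} \<times> {..<d}) (\<lambda>_. M))"
proof (rule inj_onI)
  fix F1 F2 assume F: "F1 \<in> PiE ({..<n} \<times> {..<d}) (\<lambda>_. M)" "F2 \<in> PiE ({..<n} \<times> {..<d}) (\<lambda>_. M)"
    and eq: "restrict (\<lambda>i. lifted_code n d c i F1) K = restrict (\<lambda>i. lifted_code n d c i F2) K"
  show "F1 = F2"
  proof (rule PiE_ext[OF F])
    fix p assume p: "p \<in> {..<n} \<times> {..<d}"
    define x where "x = fst p"
    have "k - 1 \<le> card (K - {x})"
      using K finite_subset[OF K(1)] by (simp add: card_Diff_singleton_if)
    then obtain K0 where K0: "K0 \<subseteq> K - {x}" "card K0 = k - 1"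
      by (meson obtain_subset_with_card_n)
    have "inj_on (squeeze x) K0" using K0(1) by (auto intro: inj_on_subset[OF inj_on_squeeze])
    then have "card (squeeze x ` K0) = k - 1" using K0(2) by (simp add: card_image)
    moreover have "squeeze x j < n - 1" if "j \<in> K0" for j
      using that K0(1) K(1) p by (intro squeeze_less) (auto simp: x_def)
    then have "squeeze x ` K0 \<subseteq> {..<n - 1}" by auto
    ultimately have inj: "inj_on (\<lambda>m. restrict (\<lambda>t. c t m) (squeeze x ` K0)) M"
      by (intro repair_code_decodable[OF small])
    have "c t (F1 p) = c t (F2 p)" if t: "t \<in> squeeze x ` K0" for t
    proof -
      obtain j where j: "j \<in> K0" "t = squeeze x j" using t by blast
      have "lifted_code n d c j F1 p = lifted_code n d c j F2 p"
        using eq j K0 by (metis Diff_iff restrict_apply' subsetD)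
      moreover have "j \<noteq> x" using j(1) K0(1) by blast
      ultimately show ?thesis using j(2) p by (auto simp: lifted_code_def x_def)
    qed
    then have "restrict (\<lambda>t. c t (F1 p)) (squeeze x ` K0) = restrict (\<lambda>t. c t (F2 p)) (squeeze x ` K0)"
      by (rule restrict_ext)
    then show "F1 p = F2 p" by (rule inj_onD[OF inj]) (use F p in \<open>auto intro: PiE_mem\<close>)
  qed
qed

lemma lifted_copy_repairable:
  assumes small: "repair_code (n - 1) k' (d - 1) \<alpha> \<gamma> q M c"
    and i: "i < n" and D: "D \<subseteq> {..<n} - {i}" "card D = d" and e: "bij_betw e {..<d} D"
    and p: "p \<in> ({..<n} - {i}) \<times> {..<d}"
  shows "\<exists>\<phi> :: nat \<Rightarrow> 'c \<Rightarrow> 'c.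
    (\<forall>t\<in>squeeze (fst p) ` helpers D e p.
      real (card ((\<lambda>m. \<phi> t (c t m)) ` M)) \<le> real q powr (\<gamma> / real (d - 1))) \<and>
    (\<forall>m1\<in>M. \<forall>m2\<in>M. (\<forall>t\<in>squeeze (fst p) ` helpers D e p. \<phi> t (c t m1) = \<phi> t (c t m2)) \<longrightarrow>
      c (squeeze (fst p) i) m1 = c (squeeze (fst p) i) m2)"
proof -
  have x: "fst p < n" "fst p \<noteq> i" using p by auto
  have H: "helpers D e p \<subseteq> D - {fst p}" by (rule helpers_subset)
  have "insert i (helpers D e p) \<subseteq> - {fst p}" using H x(2) by auto
  then have inj: "inj_on (squeeze (fst p)) (insert i (helpers D e p))"
    by (rule inj_on_subset[OF inj_on_squeeze])
  have i': "squeeze (fst p) i < n - 1" using x i by (intro squeeze_less) auto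
  have "squeeze (fst p) h < n - 1" if "h \<in> helpers D e p" for h
    using that H D(1) x(1) by (intro squeeze_less) auto
  moreover have "squeeze (fst p) h \<noteq> squeeze (fst p) i" if h: "h \<in> helpers D e p" for h
  proof
    assume eq: "squeeze (fst p) h = squeeze (fst p) i"
    have "h = i" by (rule inj_onD[OF inj eq]) (use h in auto)
    then show False using h H D(1) by auto
  qed
  ultimately have sub: "squeeze (fst p) ` helpers D e p \<subseteq> {..<n - 1} - {squeeze (fst p) i}"
    by auto
  have "e (snd p) \<in> D" using e p by (auto simp: bij_betw_def)
  then have "card (squeeze (fst p) ` helpers D e p) = d - 1"
    using inj D finite_subset[OF D(1)] by (simp add: card_image card_helpers)
  then obtain \<phi> :: "nat \<Rightarrow> 'c \<Rightarrow> 'c" where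
    bound: "\<And>t. t \<in> squeeze (fst p) ` helpers D e p \<Longrightarrow>
      real (card ((\<lambda>m. \<phi> t (c t m)) ` M)) \<le> real q powr (\<gamma> / real (d - 1))"
    and determ: "\<And>m1 m2. m1 \<in> M \<Longrightarrow> m2 \<in> M \<Longrightarrow>
      (\<And>t. t \<in> squeeze (fst p) ` helpers D e p \<Longrightarrow> \<phi> t (c t m1) = \<phi> t (c t m2)) \<Longrightarrow>
      c (squeeze (fst p) i) m1 = c (squeeze (fst p) i) m2"
    using repair_code_repairable[OF small i' sub] by blast
  show ?thesis
  proof (intro exI[of _ \<phi>] conjI ballI impI)
    show "real (card ((\<lambda>m. \<phi> t (c t m)) ` M)) \<le> real q powr (\<gamma> / real (d - 1))"
      if "t \<in> squeeze (fst p) ` helpers D e p" for t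
      using that by (rule bound)
    show "c (squeeze (fst p) i) m1 = c (squeeze (fst p) i) m2"
      if "m1 \<in> M" "m2 \<in> M"
        and "\<forall>t\<in>squeeze (fst p) ` helpers D e p. \<phi> t (c t m1) = \<phi> t (c t m2)" for m1 m2
      using that by (auto intro: determ)
  qed
qed

definition lifted_message ::
  "(nat \<times> nat \<Rightarrow> nat \<Rightarrow> 'c \<Rightarrow> 'c) \<Rightarrow> (nat \<times> nat) set \<Rightarrow> nat \<Rightarrow> (nat \<times> nat \<Rightarrow> 'c) \<Rightarrow> nat \<times> nat \<Rightarrow> 'c"
where
  "lifted_message \<Phi> P h G = restrict (\<lambda>p. \<Phi> p (squeeze (fst p) h) (G p)) P"

lemma lifted_message_lifted_code:
  assumes "P \<subseteq> ({..<n} - {h}) \<times> {..<d}"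
  shows "lifted_message \<Phi> P h (lifted_code n d c h F)
    = restrict (\<lambda>p. \<Phi> p (squeeze (fst p) h) (c (squeeze (fst p) h) (F p))) P"
  using assms unfolding lifted_message_def lifted_code_def by (intro restrict_ext) auto

lemma card_lifted_message_le:
  assumes finM: "finite M" and P: "P \<subseteq> ({..<n} - {h}) \<times> {..<d}"
    and bound: "\<And>p. p \<in> P \<Longrightarrow>
      real (card ((\<lambda>m. \<Phi> p (squeeze (fst p) h) (c (squeeze (fst p) h) m)) ` M)) \<le> b"
  shows "real (card ((\<lambda>F. lifted_message \<Phi> P h (lifted_code n d c h F)) ` PiE ({..<n} \<times> {..<d}) (\<lambda>_. M)))
    \<le> b ^ card P"
  unfolding lifted_message_lifted_code[OF P]
proof (rule card_restrict_image_le_power)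
  show "finite P" using P by (rule finite_subset) simp
  show "finite (PiE ({..<n} \<times> {..<d}) (\<lambda>_. M))" by (simp add: finM finite_PiE)
  fix p assume p: "p \<in> P"
  then have "card ((\<lambda>F. \<Phi> p (squeeze (fst p) h) (c (squeeze (fst p) h) (F p))) ` PiE ({..<n} \<times> {..<d}) (\<lambda>_. M))
      \<le> card ((\<lambda>m. \<Phi> p (squeeze (fst p) h) (c (squeeze (fst p) h) m)) ` M)"
    using P by (intro card_image_eval_PiE_le finM) auto
  then show "real (card ((\<lambda>F. \<Phi> p (squeeze (fst p) h) (c (squeeze (fst p) h) (F p)))
      ` PiE ({..<n} \<times> {..<d}) (\<lambda>_. M))) \<le> b"
    using bound[OF p] by linarith
qed

lemma powr_bandwidth_rescale:
  assumes "0 < q" and "2 \<le> d"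
  shows "(real q powr (\<gamma> / real (d - 1))) ^ ((n - 1) * (d - 1)) = real (q ^ ((n - 1) * d)) powr (\<gamma> / real d)"
proof -
  have "real ((n - 1) * (d - 1)) * (\<gamma> / real (d - 1)) = real ((n - 1) * d) * (\<gamma> / real d)"
    using assms(2) by (simp add: of_nat_diff)
  then show ?thesis
    using assms by (simp add: powr_power powr_realpow[symmetric] powr_powr mult.commute)
qed

lemma lifted_code_repairable:
  fixes M :: "'f set" and c :: "nat \<Rightarrow> 'f \<Rightarrow> 'c"
  assumes small: "repair_code (n - 1) k' (d - 1) \<alpha> \<gamma> q M c"
    and d: "2 \<le> d" and q: "1 \<le> q" and \<gamma>: "0 \<le> \<gamma>"
    and i: "i < n" and D: "D \<subseteq> {..<n} - {i}" "card D = d"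
  shows "\<exists>\<phi> :: nat \<Rightarrow> (nat \<times> nat \<Rightarrow> 'c) \<Rightarrow> (nat \<times> nat \<Rightarrow> 'c).
    (\<forall>h\<in>D. real (card ((\<lambda>F. \<phi> h (lifted_code n d c h F)) ` PiE ({..<n} \<times> {..<d}) (\<lambda>_. M)))
       \<le> real (q ^ ((n - 1) * d)) powr (\<gamma> / real d)) \<and>
    (\<forall>F1\<in>PiE ({..<n} \<times> {..<d}) (\<lambda>_. M). \<forall>F2\<in>PiE ({..<n} \<times> {..<d}) (\<lambda>_. M).
       (\<forall>h\<in>D. \<phi> h (lifted_code n d c h F1) = \<phi> h (lifted_code n d c h F2)) \<longrightarrow>
       lifted_code n d c i F1 = lifted_code n d c i F2)"
proof -
  define I where "I = ({..<n} - {i}) \<times> {..<d}"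
  have "finite D" using D(1) by (rule finite_subset) simp
  then obtain e where e: "bij_betw e {..<d} D"
    using ex_bij_betw_nat_finite D(2) by (metis atLeast0LessThan)
  define S where "S p = squeeze (fst p) ` helpers D e p" for p
  have "\<forall>p\<in>I. \<exists>\<phi> :: nat \<Rightarrow> 'c \<Rightarrow> 'c.
    (\<forall>t\<in>S p. real (card ((\<lambda>m. \<phi> t (c t m)) ` M)) \<le> real q powr (\<gamma> / real (d - 1))) \<and>
    (\<forall>m1\<in>M. \<forall>m2\<in>M. (\<forall>t\<in>S p. \<phi> t (c t m1) = \<phi> t (c t m2)) \<longrightarrow>
      c (squeeze (fst p) i) m1 = c (squeeze (fst p) i) m2)"
    unfolding I_def S_def by (intro ballI lifted_copy_repairable[OF small i D e])
  then obtain \<Phi> :: "nat \<times> nat \<Rightarrow> nat \<Rightarrow> 'c \<Rightarrow> 'c" where \<Phi>: "\<forall>p\<in>I.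
    (\<forall>t\<in>S p. real (card ((\<lambda>m. \<Phi> p t (c t m)) ` M)) \<le> real q powr (\<gamma> / real (d - 1))) \<and>
    (\<forall>m1\<in>M. \<forall>m2\<in>M. (\<forall>t\<in>S p. \<Phi> p t (c t m1) = \<Phi> p t (c t m2)) \<longrightarrow>
      c (squeeze (fst p) i) m1 = c (squeeze (fst p) i) m2)"
    by (rule bchoice[THEN exE])
  define load where "load h = {p \<in> I. h \<in> helpers D e p}" for h
  have load: "p \<in> I" "squeeze (fst p) h \<in> S p" if "p \<in> load h" for p h
    using that by (auto simp: load_def S_def)
  have load_subset: "load h \<subseteq> ({..<n} - {h}) \<times> {..<d}" for h
    using helpers_subset by (fastforce simp: load_def I_def)
  show ?thesis
  proof (intro exI[of _ "\<lambda>h. lifted_message \<Phi> (load h) h"] conjI ballI impI)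
    fix h assume h: "h \<in> D"
    have "real (card ((\<lambda>F. lifted_message \<Phi> (load h) h (lifted_code n d c h F))
        ` PiE ({..<n} \<times> {..<d}) (\<lambda>_. M))) \<le> (real q powr (\<gamma> / real (d - 1))) ^ card (load h)"
      using repair_code_finite[OF small] load_subset
      by (rule card_lifted_message_le) (use \<Phi> load in blast)
    also have "\<dots> \<le> (real q powr (\<gamma> / real (d - 1))) ^ ((n - 1) * (d - 1))"
    proof (rule power_increasing)
      show "card (load h) \<le> (n - 1) * (d - 1)"
        using card_helper_load[OF e D i h] by (simp add: load_def I_def)
      show "1 \<le> real q powr (\<gamma> / real (d - 1))" using q \<gamma> d by (simp add: ge_one_powr_ge_zero)
    qed
    also have "\<dots> = real (q ^ ((n - 1) * d)) powr (\<gamma> / real d)"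
      using q d by (intro powr_bandwidth_rescale) auto
    finally show "real (card ((\<lambda>F. lifted_message \<Phi> (load h) h (lifted_code n d c h F))
        ` PiE ({..<n} \<times> {..<d}) (\<lambda>_. M))) \<le> real (q ^ ((n - 1) * d)) powr (\<gamma> / real d)" .
  next
    fix F1 F2 assume F: "F1 \<in> PiE ({..<n} \<times> {..<d}) (\<lambda>_. M)" "F2 \<in> PiE ({..<n} \<times> {..<d}) (\<lambda>_. M)"
      and same: "\<forall>h\<in>D. lifted_message \<Phi> (load h) h (lifted_code n d c h F1)
        = lifted_message \<Phi> (load h) h (lifted_code n d c h F2)"
    have "c (squeeze (fst p) i) (F1 p) = c (squeeze (fst p) i) (F2 p)" if p: "p \<in> I" for p
    proof -
      have "F1 p \<in> M" "F2 p \<in> M" using F p by (auto simp: I_def intro: PiE_mem)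
      moreover have "\<Phi> p t (c t (F1 p)) = \<Phi> p t (c t (F2 p))" if t: "t \<in> S p" for t
      proof -
        obtain h where h: "h \<in> helpers D e p" "t = squeeze (fst p) h" using t by (auto simp: S_def)
        then have "h \<in> D" "p \<in> load h" using p helpers_subset[of D e p] by (auto simp: load_def)
        then show ?thesis
          using same h(2) by (auto simp: lifted_message_lifted_code[OF load_subset] restrict_eq_restrict_iff)
      qed
      ultimately show ?thesis by (rule conjunct2[OF bspec[OF \<Phi> p], rule_format])
    qed
    then show "lifted_code n d c i F1 = lifted_code n d c i F2"
      unfolding lifted_code_def I_def by (intro restrict_ext) auto
  qed
qed

lemma repair_code_lifted:
  fixes M :: "'f set" and c :: "nat \<Rightarrow> 'f \<Rightarrow> 'c"
  assumes small: "repair_code (n - 1) (k - 1) (d - 1) \<alpha> \<gamma> q M c"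
    and "2 \<le> d" and "1 \<le> q" and "0 \<le> \<gamma>"
  shows "repair_code n k d \<alpha> \<gamma> (q ^ ((n - 1) * d)) (PiE ({..<n} \<times> {..<d}) (\<lambda>_. M)) (lifted_code n d c)"
proof (rule repair_codeI)
  show "finite (PiE ({..<n} \<times> {..<d}) (\<lambda>_. M))"
    by (simp add: finite_PiE repair_code_finite[OF small])
  show "PiE ({..<n} \<times> {..<d}) (\<lambda>_. M) \<noteq> {}"
    by (simp add: PiE_eq_empty_iff repair_code_nonempty[OF small])
  show "real (card (lifted_code n d c i ` PiE ({..<n} \<times> {..<d}) (\<lambda>_. M)))
      \<le> real (q ^ ((n - 1) * d)) powr \<alpha>" if "i < n" for i
    using assms that by (intro lifted_code_node_card[OF small]) auto
  show "inj_on (\<lambda>F. restrict (\<lambda>i. lifted_code n d c i F) K) (PiE ({..<n} \<times> {..<d}) (\<lambda>_. M))"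
    if "K \<subseteq> {..<n}" "card K = k" for K
    using that by (rule lifted_code_decodable[OF small])
  show "\<exists>\<phi> :: nat \<Rightarrow> (nat \<times> nat \<Rightarrow> 'c) \<Rightarrow> (nat \<times> nat \<Rightarrow> 'c).
    (\<forall>h\<in>D. real (card ((\<lambda>F. \<phi> h (lifted_code n d c h F)) ` PiE ({..<n} \<times> {..<d}) (\<lambda>_. M)))
       \<le> real (q ^ ((n - 1) * d)) powr (\<gamma> / real d)) \<and>
    (\<forall>F1\<in>PiE ({..<n} \<times> {..<d}) (\<lambda>_. M). \<forall>F2\<in>PiE ({..<n} \<times> {..<d}) (\<lambda>_. M).
       (\<forall>h\<in>D. \<phi> h (lifted_code n d c h F1) = \<phi> h (lifted_code n d c h F2)) \<longrightarrow>
       lifted_code n d c i F1 = lifted_code n d c i F2)"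
    if "i < n" "D \<subseteq> {..<n} - {i}" "card D = d" for i D
    using assms(2-4) that by (rule lifted_code_repairable[OF small])
qed

lemma exact_repair_code_lift:
  assumes small: "exact_repair_code (n - 1) (k - 1) (d - 1) \<alpha> \<gamma> q M c"
    and d: "2 \<le> d" "d < n" and q: "2 \<le> q" and \<gamma>: "0 \<le> \<gamma>"
  obtains Q M' c' where "2 \<le> Q" and "exact_repair_code n k d \<alpha> \<gamma> Q M' c'"
    and "log (real Q) (real (card M')) = real n / real (n - 1) * log (real q) (real (card M))"
proof -
  define N where "N = (n - 1) * d"
  have small': "repair_code (n - 1) (k - 1) (d - 1) \<alpha> \<gamma> q M c"
    using small by (simp add: exact_repair_code_iff_repair_code)
  have q1: "1 \<le> q" using q by simp
  obtain M' :: "nat set" and c' :: "nat \<Rightarrow> nat \<Rightarrow> nat"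
    where code: "repair_code n k d \<alpha> \<gamma> (q ^ N) M' c'"
    and card: "card M' = card (PiE ({..<n} \<times> {..<d}) (\<lambda>_. M))"
    unfolding N_def using repair_code_nat_relabel[OF repair_code_lifted[OF small' d(1) q1 \<gamma>]] by blast
  have "0 < N" using d by (simp add: N_def)
  then have "q \<le> q ^ N" using q by (simp add: self_le_power)
  then have "2 \<le> q ^ N" using q by linarith
  moreover have "exact_repair_code n k d \<alpha> \<gamma> (q ^ N) M' c'"
    using code by (simp add: exact_repair_code_iff_repair_code)
  moreover have "log (real (q ^ N)) (real (card M')) = real n / real (n - 1) * log (real q) (real (card M))"
  proof -
    have "0 < card M"
      using repair_code_finite[OF small'] repair_code_nonempty[OF small'] by (simp add: card_gt_0_iff)
    moreover have "card M' = card M ^ (n * d)"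
      using card repair_code_finite[OF small'] by (simp add: card_PiE card_cartesian_product)
    ultimately have "log (real (q ^ N)) (real (card M')) = real (n * d) * ln (real (card M)) / (real N * ln (real q))"
      by (simp add: log_def ln_realpow)
    also have "\<dots> = real n / real (n - 1) * log (real q) (real (card M))"
      using d by (simp add: N_def log_def of_nat_diff)
    finally show ?thesis .
  qed
  ultimately show ?thesis by (rule that)
qed

lemma cSup_scaled_le:
  fixes S T :: "real set"
  assumes "T \<noteq> {}" and "bdd_above S" and "0 < r" and "\<And>x. x \<in> T \<Longrightarrow> r * x \<in> S"
  shows "r * Sup T \<le> Sup S"
proof -
  have "Sup T \<le> Sup S / r"
  proof (rule cSup_least[OF assms(1)])
    fix x assume "x \<in> T"
    then have "r * x \<le> Sup S" using assms(2,4) by (intro cSup_upper)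
    then show "x \<le> Sup S / r" using assms(3) by (simp add: field_simps)
  qed
  then show ?thesis using assms(3) by (simp add: field_simps)
qed

lemma C_exact_lift:
  assumes "2 \<le> k" and "k \<le> d" and "d < n" and "0 \<le> \<alpha>" and "0 \<le> \<gamma>"
  shows "real n / real (n - 1) * C_exact (n - 1) (k - 1) (d - 1) \<alpha> \<gamma> \<le> C_exact n k d \<alpha> \<gamma>"
  unfolding C_exact_def
proof (rule cSup_scaled_le)
  have "exact_repair_code (n - 1) (k - 1) (d - 1) \<alpha> \<gamma> 2 {0} (\<lambda>i m. 0)"
    using repair_code_single_file[OF assms(4,5)] by (simp add: exact_repair_code_iff_repair_code)
  then show "{log (real q) (real (card M)) |q M c.
      2 \<le> q \<and> exact_repair_code (n - 1) (k - 1) (d - 1) \<alpha> \<gamma> q M c} \<noteq> {}"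
    by blast
  show "bdd_above {log (real q) (real (card M)) |q M c. 2 \<le> q \<and> exact_repair_code n k d \<alpha> \<gamma> q M c}"
  proof (rule bdd_aboveI)
    fix x assume "x \<in> {log (real q) (real (card M)) |q M c. 2 \<le> q \<and> exact_repair_code n k d \<alpha> \<gamma> q M c}"
    then obtain q M c where "x = log (real q) (real (card M))" "2 \<le> q" "exact_repair_code n k d \<alpha> \<gamma> q M c"
      by blast
    then show "x \<le> real k * \<alpha>"
      using repair_code_file_size_le[of n k d \<alpha> \<gamma> q M c] assms(2,3)
      by (simp add: exact_repair_code_iff_repair_code)
  qed
  show "0 < real n / real (n - 1)" using assms by simp
  fix x assume "x \<in> {log (real q) (real (card M)) |q M c.
      2 \<le> q \<and> exact_repair_code (n - 1) (k - 1) (d - 1) \<alpha> \<gamma> q M c}"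
  then obtain q M c where x: "x = log (real q) (real (card M))"
    and q: "2 \<le> q" and small: "exact_repair_code (n - 1) (k - 1) (d - 1) \<alpha> \<gamma> q M c"
    by blast
  have d: "2 \<le> d" using assms(1,2) by simp
  obtain Q M' c' where "2 \<le> Q" "exact_repair_code n k d \<alpha> \<gamma> Q M' c'"
    "real n / real (n - 1) * x = log (real Q) (real (card M'))"
    using exact_repair_code_lift[OF small d assms(3) q assms(5)] unfolding x by (metis (no_types))
  then show "real n / real (n - 1) * x
      \<in> {log (real q) (real (card M)) |q M c. 2 \<le> q \<and> exact_repair_code n k d \<alpha> \<gamma> q M c}"
    by blast
qed

theorem theorem3p1:
  fixes n k d j :: nat and \<alpha> \<gamma> :: real
  assumes "1 \<le> k" and "k \<le> d" and "d < n"
    and "\<alpha> > 0" and "\<gamma> > 0"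
    and "j \<le> k - 1"
  shows "C_exact n k d \<alpha> \<gamma> \<ge> real n / real (n - j) * C_exact (n - j) (k - j) (d - j) \<alpha> \<gamma>"
  using assms
proof (induction j arbitrary: n k d)
  case 0
  then show ?case by simp
next
  case (Suc j)
  have "real n / real (n - Suc j) * C_exact (n - Suc j) (k - Suc j) (d - Suc j) \<alpha> \<gamma>
      = real n / real (n - 1) * (real (n - 1) / real (n - 1 - j) * C_exact (n - 1 - j) (k - 1 - j) (d - 1 - j) \<alpha> \<gamma>)"
    using Suc.prems by simp
  also have "\<dots> \<le> real n / real (n - 1) * C_exact (n - 1) (k - 1) (d - 1) \<alpha> \<gamma>"
    using Suc.prems by (intro mult_left_mono Suc.IH) auto
  also have "\<dots> \<le> C_exact n k d \<alpha> \<gamma>"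
    using Suc.prems by (intro C_exact_lift) auto
  finally show ?case .
qed

end
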